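(* Let $2<\alpha<4$ and $0<N_1\le N_2$. Consider the two-player Random Access Game in which player $i\in\{1,2\}$ chooses $\Lambda_i\in[0,N_i]$ and receives payoff \[ U_i(\Lambda_1,\Lambda_2)=\sup_{\beta>0}\ \Lambda_i\log(1+\beta)\,e^{-(\Lambda_1+\Lambda_2)\beta^{2/\alpha}} . \] Then this game has a unique Nash equilibrium $(\Lambda_1^*,\Lambda_2^* )$; it is given by $\Lambda_1^*=N_1$ and $\Lambda_2^*=\min(x,N_2)$, where $x$ is the solution of \[ N_1=x\left(\frac{\alpha}{2\left(1+x^{\alpha/2}\right)\log\left(1+x^{-\alpha/2}\right)}-1\right). \]
   Context: A Nash equilibrium is a pair $(\Lambda_1^*,\Lambda_2^* )\in[0,N_1]\times[0,N_2]$ such that $\Lambda_1^*$ maximizes $U_1(\cdot,\Lambda_2^* )$ over $[0,N_1]$ and $\Lambda_2^*$ maximizes $U_2(\Lambda_1^*,\cdot)$ over $[0,N_2]$. Here $N_i$ is the average number of nodes per transmission disc of network $i$, $\Lambda_i$ is its average number of simultaneous transmissions per disc, and $\log$ is the natural logarithm. *)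

theory Defs
  imports "HOL-Analysis.Analysis"
begin

definition rag_payoff :: "real \<Rightarrow> real \<Rightarrow> real \<Rightarrow> real \<Rightarrow> real" where
  "rag_payoff \<alpha> own L1 L2 =
     (SUP \<beta>\<in>{0<..}. own * ln (1 + \<beta>) * exp (- (L1 + L2) * \<beta> powr (2 / \<alpha>)))"

definition U1 :: "real \<Rightarrow> real \<Rightarrow> real \<Rightarrow> real" where
  "U1 \<alpha> L1 L2 = rag_payoff \<alpha> L1 L1 L2"

definition U2 :: "real \<Rightarrow> real \<Rightarrow> real \<Rightarrow> real" where
  "U2 \<alpha> L1 L2 = rag_payoff \<alpha> L2 L1 L2"

definition nash_eq :: "real \<Rightarrow> real \<Rightarrow> real \<Rightarrow> real \<Rightarrow> real \<Rightarrow> bool" where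
  "nash_eq \<alpha> N1 N2 L1 L2 \<longleftrightarrow>
     L1 \<in> {0..N1} \<and> L2 \<in> {0..N2} \<and>
     (\<forall>l\<in>{0..N1}. U1 \<alpha> l L2 \<le> U1 \<alpha> L1 L2) \<and>
     (\<forall>l\<in>{0..N2}. U2 \<alpha> L1 l \<le> U2 \<alpha> L1 L2)"

end

theory Submission
  imports Defs "HOL-Real_Asymp.Real_Asymp"
begin

text \<open>
  Substituting \<open>\<beta> = t powr k\<close> with \<open>k = \<alpha> / 2\<close>, a player with load \<open>L\<close> facing the load
  \<open>c\<close> of the other player earns \<open>L * g (L + c)\<close>, where \<open>g S\<close> is the maximum over \<open>t > 0\<close> of
  \<open>ln (1 + t powr k) * exp (- S * t)\<close>. As a supremum of affine functions of \<open>S\<close>, \<open>ln g\<close> is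
  convex, hence continuous, and a maximiser \<open>\<tau> S\<close> gives the supporting line
  \<open>g S' \<ge> g S * exp (- (S' - S) * \<tau> S)\<close>. Since \<open>L' * exp (- L' * \<tau>)\<close> is unimodal with peak at
  \<open>1 / \<tau>\<close>, the payoff strictly increases when \<open>L\<close> moves towards \<open>1 / \<tau> (L + c)\<close>.
  Comparing the first-order condition \<open>(L + c) * \<Phi> (\<tau> (L + c)) = k\<close> with the identity
  \<open>(\<psi> L + L) * \<Phi> (1 / L) = k\<close> for the function \<open>\<psi>\<close> of the theorem shows that
  \<open>\<tau> (L + c) < 1 / L\<close> iff \<open>\<psi> L < c\<close>. So the payoff increases strictly up to the unique root
  \<open>x\<^sub>c\<close> of \<open>\<psi> x = c\<close> and decreases afterwards, and the best response within \<open>[0, N]\<close> is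
  \<open>min N x\<^sub>c\<close>. As \<open>x\<^sub>c > c\<close> and \<open>N\<^sub>1 \<le> N\<^sub>2\<close>, the only mutual best responses are
  \<open>(N\<^sub>1, min N\<^sub>2 x\<^sub>N\<^sub>1)\<close>.
\<close>

definition phi :: "real \<Rightarrow> real" where
  "phi y = (1 + y) * ln (1 + y) / y"

lemma phi_gt_one:
  assumes "0 < y"
  shows "1 < phi y"
proof -
  have "ln 1 - ln (1 + y) < (1 - (1 + y)) / (1 + y)"
    using assms by (intro ln_diff_less) auto
  then have "y < (1 + y) * ln (1 + y)"
    using assms by (simp add: field_simps)
  then show ?thesis
    unfolding phi_def using assms by simp
qed

lemma phi_has_real_derivative:
  assumes "0 < y"
  shows "(phi has_real_derivative (y - ln (1 + y)) / y\<^sup>2) (at y)"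
proof -
  have "(phi has_real_derivative
        ((ln (1 + y) + (1 + y) * (1 / (1 + y))) * y - (1 + y) * ln (1 + y)) / (y * y)) (at y)"
    unfolding phi_def[abs_def] using assms by (auto intro!: derivative_eq_intros)
  then show ?thesis
    using assms by (simp add: field_simps power2_eq_square)
qed

lemma phi_strict_mono:
  assumes "0 < a" "a < b"
  shows "phi a < phi b"
proof (rule DERIV_pos_imp_increasing[OF \<open>a < b\<close>])
  fix y
  assume "a \<le> y" "y \<le> b"
  with assms have "0 < y" by simp
  then show "\<exists>d. (phi has_real_derivative d) (at y) \<and> 0 < d"
    using phi_has_real_derivative ln_add_one_self_less_self by fastforce
qed

text \<open>\<open>S * Phi k t = k\<close> is the first-order condition for a maximum of
  \<open>t \<mapsto> ln (1 + t powr k) * exp (- S * t)\<close>.\<close>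

definition Phi :: "real \<Rightarrow> real \<Rightarrow> real" where
  "Phi k t = t * phi (t powr k)"

lemma Phi_pos: "0 < t \<Longrightarrow> 0 < Phi k t"
  unfolding Phi_def using phi_gt_one[of "t powr k"] by simp

lemma Phi_strict_mono:
  assumes "0 < k" "0 < a" "a < b"
  shows "Phi k a < Phi k b"
proof -
  have "phi (a powr k) < phi (b powr k)"
    using assms by (intro phi_strict_mono powr_less_mono2) auto
  moreover have "0 < phi (a powr k)"
    using phi_gt_one[of "a powr k"] assms by simp
  ultimately show ?thesis
    unfolding Phi_def using assms by (intro mult_strict_mono) auto
qed

lemma Phi_less_iff:
  assumes "0 < k" "0 < a" "0 < b"
  shows "Phi k a < Phi k b \<longleftrightarrow> a < b"
  using Phi_strict_mono[OF \<open>0 < k\<close>] assms by (metis less_asym linorder_neqE_linordered_idom)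

definition psi :: "real \<Rightarrow> real \<Rightarrow> real" where
  "psi \<alpha> x = x * (\<alpha> / (2 * (1 + x powr (\<alpha> / 2)) * ln (1 + x powr (- \<alpha> / 2))) - 1)"

lemma psi_eq_phi:
  assumes "0 < x"
  shows "psi \<alpha> x = x * (\<alpha> / 2 / phi (x powr (- \<alpha> / 2)) - 1)"
proof -
  have "x powr (- \<alpha> / 2) * x powr (\<alpha> / 2) = 1"
    using assms by (simp add: powr_add[symmetric])
  then have "phi (x powr (- \<alpha> / 2)) = (1 + x powr (\<alpha> / 2)) * ln (1 + x powr (- \<alpha> / 2))"
    unfolding phi_def using assms by (simp add: field_simps)
  then show ?thesis
    unfolding psi_def by simp
qed

lemma psi_add_self_mult_Phi:
  assumes "0 < x"
  shows "(psi \<alpha> x + x) * Phi (\<alpha> / 2) (1 / x) = \<alpha> / 2"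
proof -
  have "Phi (\<alpha> / 2) (1 / x) = phi (x powr (- \<alpha> / 2)) / x"
    unfolding Phi_def using assms by (simp add: powr_divide powr_minus_divide)
  moreover have "0 < phi (x powr (- \<alpha> / 2))"
    using phi_gt_one[of "x powr (- \<alpha> / 2)"] assms by simp
  ultimately show ?thesis
    using assms by (simp add: psi_eq_phi field_simps)
qed

lemma psi_less_self:
  assumes "0 < x" "\<alpha> < 4"
  shows "psi \<alpha> x < x"
proof -
  have "\<alpha> / 2 / phi (x powr (- \<alpha> / 2)) < 2"
    using phi_gt_one[of "x powr (- \<alpha> / 2)"] assms by (simp add: field_simps)
  then show ?thesis
    using assms by (simp add: psi_eq_phi)
qed

lemma psi_strict_mono:
  assumes "0 < \<alpha>" "0 < x" "x < y" "0 < psi \<alpha> x"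
  shows "psi \<alpha> x < psi \<alpha> y"
proof -
  have "phi (y powr (- \<alpha> / 2)) < phi (x powr (- \<alpha> / 2))"
    using assms by (intro phi_strict_mono powr_less_mono2_neg) auto
  then have "\<alpha> / 2 / phi (x powr (- \<alpha> / 2)) < \<alpha> / 2 / phi (y powr (- \<alpha> / 2))"
    using assms phi_gt_one[of "y powr (- \<alpha> / 2)"] by (intro divide_strict_left_mono) auto
  moreover have "0 < \<alpha> / 2 / phi (x powr (- \<alpha> / 2)) - 1"
    using assms by (simp add: psi_eq_phi zero_less_mult_iff)
  ultimately show ?thesis
    using assms by (simp add: psi_eq_phi mult_strict_mono)
qed

lemma filterlim_psi_at_top: "2 < \<alpha> \<Longrightarrow> filterlim (psi \<alpha>) at_top at_top"
  unfolding psi_def[abs_def] by real_asymp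

lemma continuous_on_psi: "continuous_on {0<..} (psi \<alpha>)"
  unfolding psi_def[abs_def]
  by (intro continuous_intros) (auto simp: add_nonneg_eq_0_iff add_pos_nonneg)

lemma psi_eq_has_unique_root:
  assumes "2 < \<alpha>" "\<alpha> < 4" "0 < c"
  shows "\<exists>!x. 0 < x \<and> psi \<alpha> x = c"
proof -
  have "eventually (\<lambda>x. c \<le> x \<and> c \<le> psi \<alpha> x) at_top"
    using filterlim_psi_at_top[OF assms(1)]
    by (intro eventually_conj eventually_ge_at_top) (simp add: filterlim_at_top)
  then obtain X where X: "c \<le> X" "c \<le> psi \<alpha> X"
    unfolding eventually_at_top_linorder by blast
  moreover have "psi \<alpha> c \<le> c"
    using psi_less_self[of c \<alpha>] assms by simp
  moreover have "continuous_on {c..X} (psi \<alpha>)"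
    using continuous_on_psi by (rule continuous_on_subset) (use assms in auto)
  ultimately obtain x where x: "c \<le> x" "psi \<alpha> x = c"
    using IVT'[of "psi \<alpha>" c c X] by auto
  have "y = x" if "0 < y" "psi \<alpha> y = c" for y
    using psi_strict_mono[of \<alpha> y x] psi_strict_mono[of \<alpha> x y] that x assms
    by (cases y x rule: linorder_cases) auto
  moreover have "0 < x"
    using x assms by simp
  ultimately show ?thesis
    using x by blast
qed

definition psi_root :: "real \<Rightarrow> real \<Rightarrow> real" where
  "psi_root \<alpha> c = (THE x. 0 < x \<and> psi \<alpha> x = c)"

lemma psi_root:
  assumes "2 < \<alpha>" "\<alpha> < 4" "0 < c"
  shows "0 < psi_root \<alpha> c" "psi \<alpha> (psi_root \<alpha> c) = c"
  using theI'[OF psi_eq_has_unique_root[OF assms]] unfolding psi_root_def by auto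

lemma psi_root_eqI:
  assumes "2 < \<alpha>" "\<alpha> < 4" "0 < x" "psi \<alpha> x = c" "0 < c"
  shows "psi_root \<alpha> c = x"
  using psi_eq_has_unique_root[OF assms(1,2,5)] psi_root[OF assms(1,2,5)] assms(3,4) by blast

lemma psi_less_iff_less_psi_root:
  assumes "2 < \<alpha>" "\<alpha> < 4" "0 < c" "0 < y"
  shows "psi \<alpha> y < c \<longleftrightarrow> y < psi_root \<alpha> c"
    and "c < psi \<alpha> y \<longleftrightarrow> psi_root \<alpha> c < y"
proof -
  let ?x = "psi_root \<alpha> c"
  have x: "0 < ?x" "psi \<alpha> ?x = c"
    using psi_root[OF assms(1-3)] by auto
  have below: "psi \<alpha> y < c" if "y < ?x"
    using psi_strict_mono[of \<alpha> y ?x] that x assms by force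
  have above: "c < psi \<alpha> y" if "?x < y"
    using psi_strict_mono[of \<alpha> ?x y] that x assms by simp
  show "psi \<alpha> y < c \<longleftrightarrow> y < ?x" "c < psi \<alpha> y \<longleftrightarrow> ?x < y"
    using below above x by (cases y ?x rule: linorder_cases; force)+
qed

lemma less_psi_root:
  assumes "2 < \<alpha>" "\<alpha> < 4" "0 < c"
  shows "c < psi_root \<alpha> c"
  using psi_less_iff_less_psi_root(1)[OF assms assms(3)] psi_less_self[of c \<alpha>] assms by simp

lemma psi_root_mono:
  assumes "2 < \<alpha>" "\<alpha> < 4" "0 < c" "c \<le> c'"
  shows "psi_root \<alpha> c \<le> psi_root \<alpha> c'"
proof -
  have "0 < c'" "0 < psi_root \<alpha> c'" "psi \<alpha> (psi_root \<alpha> c') = c'"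
    using psi_root[of \<alpha> c'] assms by auto
  then show ?thesis
    using psi_less_iff_less_psi_root(1)[of \<alpha> c "psi_root \<alpha> c'"] assms by fastforce
qed

section \<open>Optimising over the SINR threshold\<close>

definition W :: "real \<Rightarrow> real \<Rightarrow> real \<Rightarrow> real" where
  "W k S t = ln (1 + t powr k) * exp (- S * t)"

lemma W_pos: "0 < t \<Longrightarrow> 0 < W k S t"
  unfolding W_def by (intro mult_pos_pos ln_gt_zero) auto

lemma continuous_on_W: "continuous_on {0<..} (W k S)"
  unfolding W_def[abs_def] by (intro continuous_intros) (auto simp: add_nonneg_eq_0_iff)

lemma continuous_attains_sup_at_right_0_at_top:
  fixes f :: "real \<Rightarrow> real"
  assumes "continuous_on {0<..} f" "(f \<longlongrightarrow> 0) (at_right 0)" "(f \<longlongrightarrow> 0) at_top"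
    and "0 < t0" "0 < f t0"
  shows "\<exists>t>0. \<forall>u>0. f u \<le> f t"
proof -
  obtain p where p: "0 < p" "\<And>u. 0 < u \<Longrightarrow> u < p \<Longrightarrow> f u < f t0"
    using order_tendstoD(2)[OF assms(2,5)] unfolding eventually_at_right_field by auto
  obtain q where q: "\<And>u. q \<le> u \<Longrightarrow> f u < f t0"
    using order_tendstoD(2)[OF assms(3,5)] unfolding eventually_at_top_linorder by auto
  let ?I = "{min p t0..max q t0}"
  have "continuous_on ?I f"
    using assms(1) by (rule continuous_on_subset) (use p assms(4) in auto)
  moreover have "?I \<noteq> {}"
    by (simp add: min_le_iff_disj)
  ultimately obtain t where t: "t \<in> ?I" "\<And>u. u \<in> ?I \<Longrightarrow> f u \<le> f t"
    using continuous_attains_sup[of ?I f] by auto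
  have "f t0 \<le> f t"
    using t(2) by simp
  then have "f u \<le> f t" if "0 < u" for u
    using t(2)[of u] p(2)[of u] q[of u] that
    by (cases "u \<in> ?I") (auto simp: min_le_iff_disj le_max_iff_disj)
  moreover have "0 < t"
    using t(1) p(1) assms(4) by (auto simp: min_le_iff_disj)
  ultimately show ?thesis
    by blast
qed

lemma W_attains_sup:
  assumes "0 < k" "0 < S"
  shows "\<exists>t>0. \<forall>u>0. W k S u \<le> W k S t"
proof (rule continuous_attains_sup_at_right_0_at_top[OF continuous_on_W _ _ zero_less_one W_pos])
  show "(W k S \<longlongrightarrow> 0) (at_right 0)" "(W k S \<longlongrightarrow> 0) at_top"
    unfolding W_def[abs_def] using assms by real_asymp+
qed simp

lemma W_has_real_derivative:
  assumes "0 < t"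
  shows "(W k S has_real_derivative
     k * t powr (k - 1) / (1 + t powr k) * exp (- S * t) - S * ln (1 + t powr k) * exp (- S * t)) (at t)"
proof -
  have "(W k S has_real_derivative
     k * t powr (k - 1) / (1 + t powr k) * exp (- S * t) + ln (1 + t powr k) * (exp (- S * t) * (- S))) (at t)"
    unfolding W_def[abs_def] using assms by (auto intro!: derivative_eq_intros simp: add_pos_pos)
  then show ?thesis
    by (simp add: algebra_simps)
qed

lemma Phi_at_maximizer_of_W:
  assumes "0 < t" "\<And>u. 0 < u \<Longrightarrow> W k S u \<le> W k S t"
  shows "S * Phi k t = k"
proof -
  have "k * t powr (k - 1) / (1 + t powr k) * exp (- S * t) - S * ln (1 + t powr k) * exp (- S * t) = 0"
    using assms by (intro DERIV_local_max[OF W_has_real_derivative \<open>0 < t\<close>]) auto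
  then have "k * t powr (k - 1) / (1 + t powr k) = S * ln (1 + t powr k)"
    by (metis exp_not_eq_zero mult_cancel_right right_minus_eq)
  moreover have "0 < 1 + t powr k"
    by (simp add: add_pos_nonneg)
  ultimately have "k * t powr (k - 1) = S * ln (1 + t powr k) * (1 + t powr k)"
    by (simp add: divide_eq_eq)
  moreover have "t * t powr (k - 1) = t powr k"
    using assms by (simp add: powr_mult_base)
  ultimately have "t * (S * ln (1 + t powr k) * (1 + t powr k)) = k * t powr k"
    by (metis mult.left_commute)
  then show ?thesis
    unfolding Phi_def phi_def using assms by (simp add: field_simps)
qed

definition t_opt :: "real \<Rightarrow> real \<Rightarrow> real" where
  "t_opt k S = (SOME t. 0 < t \<and> (\<forall>u>0. W k S u \<le> W k S t))"

definition W_max :: "real \<Rightarrow> real \<Rightarrow> real" where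
  "W_max k S = W k S (t_opt k S)"

lemma t_opt:
  assumes "0 < k" "0 < S"
  shows t_opt_pos: "0 < t_opt k S"
    and W_le_W_max: "0 < u \<Longrightarrow> W k S u \<le> W_max k S"
  using someI_ex[OF W_attains_sup[OF assms]] unfolding t_opt_def W_max_def by auto

lemma W_max_pos: "0 < k \<Longrightarrow> 0 < S \<Longrightarrow> 0 < W_max k S"
  unfolding W_max_def using t_opt_pos W_pos by blast

lemma S_mult_Phi_t_opt: "0 < k \<Longrightarrow> 0 < S \<Longrightarrow> S * Phi k (t_opt k S) = k"
  using Phi_at_maximizer_of_W t_opt unfolding W_max_def by blast

lemma W_max_supporting:
  assumes "0 < k" "0 < S" "0 < S'"
  shows "W_max k S * exp (- (S' - S) * t_opt k S) \<le> W_max k S'"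
proof -
  have "W k S' (t_opt k S) = W_max k S * exp (- (S' - S) * t_opt k S)"
    unfolding W_max_def W_def by (simp add: exp_add[symmetric] algebra_simps)
  then show ?thesis
    using W_le_W_max[OF assms(1,3) t_opt_pos[OF assms(1,2)]] by simp
qed

lemma convex_on_if_supporting_lines:
  fixes f :: "real \<Rightarrow> real"
  assumes "convex A" "\<And>z. z \<in> A \<Longrightarrow> \<exists>d. \<forall>x\<in>A. f z + d * (x - z) \<le> f x"
  shows "convex_on A f"
proof (rule convex_onI[OF _ \<open>convex A\<close>])
  fix t x y :: real
  assume t: "0 < t" "t < 1" and xy: "x \<in> A" "y \<in> A"
  define z where "z = (1 - t) * x + t * y"
  have "z \<in> A"
    using convexD[OF \<open>convex A\<close> xy, of "1 - t" t] t unfolding z_def by simp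
  then obtain d where d: "\<forall>x\<in>A. f z + d * (x - z) \<le> f x"
    using assms(2) by blast
  have "(1 - t) * (f z + d * (x - z)) + t * (f z + d * (y - z)) \<le> (1 - t) * f x + t * f y"
    using d xy t by (intro add_mono mult_left_mono) auto
  moreover have "(1 - t) * (f z + d * (x - z)) + t * (f z + d * (y - z)) = f z"
    unfolding z_def by (simp add: algebra_simps)
  ultimately show "f ((1 - t) *\<^sub>R x + t *\<^sub>R y) \<le> (1 - t) * f x + t * f y"
    unfolding z_def by simp
qed

lemma convex_on_ln_W_max:
  assumes "0 < k"
  shows "convex_on {0<..} (\<lambda>S. ln (W_max k S))"
proof (rule convex_on_if_supporting_lines)
  fix S :: real
  assume "S \<in> {0<..}"
  have "ln (W_max k S) - t_opt k S * (S' - S) \<le> ln (W_max k S')" if "0 < S'" for S'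
  proof -
    have pos: "0 < W_max k S" "0 < W_max k S'"
      using W_max_pos assms that \<open>S \<in> {0<..}\<close> by auto
    have "ln (W_max k S * exp (- (S' - S) * t_opt k S)) \<le> ln (W_max k S')"
      using W_max_supporting assms that pos \<open>S \<in> {0<..}\<close> by simp
    then show ?thesis
      using pos by (simp add: ln_mult algebra_simps)
  qed
  then show "\<exists>d. \<forall>S'\<in>{0<..}. ln (W_max k S) + d * (S' - S) \<le> ln (W_max k S')"
    by (intro exI[of _ "- t_opt k S"]) auto
qed simp

lemma continuous_on_W_max:
  assumes "0 < k"
  shows "continuous_on {0<..} (W_max k)"
proof -
  have "continuous_on {0<..} (\<lambda>S. exp (ln (W_max k S)))"
    using convex_on_continuous[OF _ convex_on_ln_W_max[OF assms]] by (intro continuous_on_exp) simp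
  then show ?thesis
    by (rule continuous_on_eq) (use W_max_pos[OF assms] in simp)
qed

lemma rag_payoff_eq_W_max:
  assumes "0 < \<alpha>" "0 \<le> own" "0 < L1 + L2"
  shows "rag_payoff \<alpha> own L1 L2 = own * W_max (\<alpha> / 2) (L1 + L2)"
proof -
  let ?k = "\<alpha> / 2" and ?S = "L1 + L2"
  let ?f = "\<lambda>\<beta>. own * ln (1 + \<beta>) * exp (- ?S * \<beta> powr (2 / \<alpha>))"
  have f_eq: "?f \<beta> = own * W ?k ?S (\<beta> powr (2 / \<alpha>))" if "0 < \<beta>" for \<beta>
    using that assms by (simp add: W_def powr_powr)
  have "(t_opt ?k ?S powr ?k) powr (2 / \<alpha>) = t_opt ?k ?S"
    using t_opt_pos[of ?k ?S] assms by (simp add: powr_powr)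
  then have "own * W_max ?k ?S = own * W ?k ?S ((t_opt ?k ?S powr ?k) powr (2 / \<alpha>))"
    by (simp only: W_max_def)
  also have "\<dots> = ?f (t_opt ?k ?S powr ?k)"
    by (rule f_eq[symmetric]) (use t_opt_pos[of ?k ?S] assms in simp)
  finally have "own * W_max ?k ?S = ?f (t_opt ?k ?S powr ?k)" .
  moreover have "t_opt ?k ?S powr ?k \<in> {0<..}"
    using t_opt_pos[of ?k ?S] assms by simp
  moreover have "?f \<beta> \<le> own * W_max ?k ?S" if "0 < \<beta>" for \<beta>
    unfolding f_eq[OF that] using W_le_W_max[of ?k ?S] assms that by (simp add: mult_left_mono)
  ultimately show ?thesis
    unfolding rag_payoff_def by (intro cSup_eq_maximum) auto
qed

section \<open>Payoffs and best responses\<close>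

definition payoff :: "real \<Rightarrow> real \<Rightarrow> real \<Rightarrow> real" where
  "payoff \<alpha> c L = L * W_max (\<alpha> / 2) (L + c)"

lemma rag_payoff_eq_payoff:
  assumes "0 < \<alpha>" "0 \<le> L" "0 \<le> c"
  shows "rag_payoff \<alpha> L L c = payoff \<alpha> c L" "rag_payoff \<alpha> L c L = payoff \<alpha> c L"
proof -
  have "rag_payoff \<alpha> L L c = payoff \<alpha> c L \<and> rag_payoff \<alpha> L c L = payoff \<alpha> c L"
  proof (cases "L = 0")
    case True
    then show ?thesis
      unfolding rag_payoff_def payoff_def by simp
  next
    case False
    then show ?thesis
      using rag_payoff_eq_W_max[of \<alpha> L] assms unfolding payoff_def by (simp add: add.commute)
  qed
  then show "rag_payoff \<alpha> L L c = payoff \<alpha> c L" "rag_payoff \<alpha> L c L = payoff \<alpha> c L"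
    by auto
qed

lemma payoff_pos: "0 < \<alpha> \<Longrightarrow> 0 \<le> c \<Longrightarrow> 0 < L \<Longrightarrow> 0 < payoff \<alpha> c L"
  unfolding payoff_def using W_max_pos[of "\<alpha> / 2" "L + c"] by simp

lemma continuous_on_payoff:
  assumes "0 < \<alpha>" "0 \<le> c"
  shows "continuous_on {0<..} (payoff \<alpha> c)"
proof -
  have "continuous_on {0<..} (\<lambda>L. W_max (\<alpha> / 2) (L + c))"
    using assms by (intro continuous_on_compose2[OF continuous_on_W_max] continuous_intros) auto
  then show ?thesis
    unfolding payoff_def[abs_def] by (intro continuous_intros)
qed

lemma t_opt_inverse_iff:
  assumes "0 < \<alpha>" "0 < c" "0 < L"
  shows "t_opt (\<alpha> / 2) (L + c) < 1 / L \<longleftrightarrow> psi \<alpha> L < c"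
    and "1 / L < t_opt (\<alpha> / 2) (L + c) \<longleftrightarrow> c < psi \<alpha> L"
proof -
  let ?k = "\<alpha> / 2" and ?t = "t_opt (\<alpha> / 2) (L + c)"
  have t: "0 < ?t" "Phi ?k ?t = ?k / (L + c)"
    using t_opt_pos[of ?k "L + c"] S_mult_Phi_t_opt[of ?k "L + c"] assms by (auto simp: field_simps)
  have prod: "(psi \<alpha> L + L) * Phi ?k (1 / L) = ?k"
    using psi_add_self_mult_Phi assms by simp
  moreover have "0 < Phi ?k (1 / L)"
    using Phi_pos assms by simp
  ultimately have sum_pos: "0 < psi \<alpha> L + L"
    using assms by (smt (verit) half_gt_zero mult_nonpos_nonneg)
  then have Phi_inverse: "Phi ?k (1 / L) = ?k / (psi \<alpha> L + L)"
    using prod by (metis nonzero_mult_div_cancel_left order_less_irrefl)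
  have frac_less_iff: "?k / a < ?k / b \<longleftrightarrow> b < a" if "0 < a" "0 < b" for a b
    using that assms by (auto simp: field_simps)
  have "?t < 1 / L \<longleftrightarrow> Phi ?k ?t < Phi ?k (1 / L)"
    using Phi_less_iff[of ?k ?t "1 / L"] t(1) assms by simp
  also have "\<dots> \<longleftrightarrow> psi \<alpha> L < c"
    unfolding t(2) Phi_inverse by (subst frac_less_iff) (use sum_pos assms in auto)
  finally show "?t < 1 / L \<longleftrightarrow> psi \<alpha> L < c" .
  have "1 / L < ?t \<longleftrightarrow> Phi ?k (1 / L) < Phi ?k ?t"
    using Phi_less_iff[of ?k "1 / L" ?t] t(1) assms by simp
  also have "\<dots> \<longleftrightarrow> c < psi \<alpha> L"
    unfolding t(2) Phi_inverse by (subst frac_less_iff) (use sum_pos assms in auto)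
  finally show "1 / L < ?t \<longleftrightarrow> c < psi \<alpha> L" .
qed

text \<open>The hypothesis \<open>(L - L') * (1 / L' - t) < 0\<close> says that \<open>L'\<close> lies strictly between \<open>L\<close>
  and \<open>1 / t\<close>.\<close>

lemma less_mult_exp_diff:
  fixes L L' t :: real
  assumes "0 < L" "0 < L'" "(L - L') * (1 / L' - t) < 0"
  shows "L < L' * exp ((L - L') * t)"
proof -
  have "ln L - ln L' \<le> (L - L') / L'"
    using ln_diff_le assms by simp
  also have "\<dots> < (L - L') * t"
    using assms(3) by (simp add: algebra_simps)
  finally have "ln L < ln L' + (L - L') * t"
    by simp
  then have "exp (ln L) < exp (ln L' + (L - L') * t)"
    by simp
  then show ?thesis
    using assms by (simp add: exp_add)
qed

lemma payoff_less_towards_inverse_t_opt: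
  assumes "0 < \<alpha>" "0 \<le> c" "0 < L" "0 < L'" "(L - L') * (1 / L' - t_opt (\<alpha> / 2) (L + c)) < 0"
  shows "payoff \<alpha> c L < payoff \<alpha> c L'"
proof -
  let ?k = "\<alpha> / 2" and ?t = "t_opt (\<alpha> / 2) (L + c)"
  have "payoff \<alpha> c L < L' * exp ((L - L') * ?t) * W_max ?k (L + c)"
    unfolding payoff_def using less_mult_exp_diff[OF assms(3-5)] W_max_pos[of ?k "L + c"] assms
    by (intro mult_strict_right_mono) auto
  also have "\<dots> = L' * (W_max ?k (L + c) * exp (- ((L' + c) - (L + c)) * ?t))"
    by simp
  also have "\<dots> \<le> payoff \<alpha> c L'"
    unfolding payoff_def using W_max_supporting[of ?k "L + c" "L' + c"] assms
    by (intro mult_left_mono) auto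
  finally show ?thesis .
qed

lemma less_if_locally_increasing:
  fixes f :: "real \<Rightarrow> real"
  assumes "continuous_on {a..b} f" "a < b"
    and "\<And>m. a \<le> m \<Longrightarrow> m < b \<Longrightarrow> \<exists>y>m. \<forall>z. m < z \<longrightarrow> z < y \<longrightarrow> f m < f z"
  shows "f a < f b"
proof -
  have step: "\<exists>z\<in>{a..b}. f m < f z" if m: "a \<le> m" "m < b" for m
  proof -
    obtain y where "m < y" "\<And>z. m < z \<Longrightarrow> z < y \<Longrightarrow> f m < f z"
      using assms(3)[OF m] by blast
    then show ?thesis
      using m by (intro bexI[of _ "(m + min y b) / 2"]) auto
  qed
  obtain m where m: "m \<in> {a..b}" "\<And>z. z \<in> {a..b} \<Longrightarrow> f z \<le> f m"
    using continuous_attains_sup[OF compact_Icc _ assms(1)] assms(2) by auto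
  have "m = b"
  proof (rule ccontr)
    assume "m \<noteq> b"
    then obtain z where "z \<in> {a..b}" "f m < f z"
      using step[of m] m(1) by auto
    then show False
      using m(2)[of z] by simp
  qed
  obtain z where "z \<in> {a..b}" "f a < f z"
    using step[of a] assms(2) by auto
  then show ?thesis
    using m(2)[of z] \<open>m = b\<close> by simp
qed

lemma less_if_locally_decreasing:
  fixes f :: "real \<Rightarrow> real"
  assumes "continuous_on {a..b} f" "a < b"
    and "\<And>m. a < m \<Longrightarrow> m \<le> b \<Longrightarrow> \<exists>y<m. \<forall>z. y < z \<longrightarrow> z < m \<longrightarrow> f m < f z"
  shows "f b < f a"
proof -
  define g where "g x = f (- x)" for x
  have "g (- b) < g (- a)"
  proof (rule less_if_locally_increasing[where f = g])
    show "continuous_on {- b..- a} g"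
      unfolding g_def by (intro continuous_on_compose2[OF assms(1)] continuous_intros) auto
    show "- b < - a"
      using assms(2) by simp
    fix m
    assume "- b \<le> m" "m < - a"
    then obtain y where "y < - m" "\<And>z. y < z \<Longrightarrow> z < - m \<Longrightarrow> f (- m) < f z"
      using assms(3)[of "- m"] by auto
    then show "\<exists>y>m. \<forall>z. m < z \<longrightarrow> z < y \<longrightarrow> g m < g z"
      unfolding g_def by (intro exI[of _ "- y"]) auto
  qed
  then show ?thesis
    unfolding g_def by simp
qed

lemma payoff_strict_mono_below_psi_root:
  assumes "2 < \<alpha>" "\<alpha> < 4" "0 < c" "0 < L" "L < L'" "L' \<le> psi_root \<alpha> c"
  shows "payoff \<alpha> c L < payoff \<alpha> c L'"
proof (rule less_if_locally_increasing[where f = "payoff \<alpha> c"])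
  show "continuous_on {L..L'} (payoff \<alpha> c)"
    using assms by (intro continuous_on_subset[OF continuous_on_payoff]) auto
  fix m
  assume "L \<le> m" "m < L'"
  then have m: "0 < m" "psi \<alpha> m < c"
    using psi_less_iff_less_psi_root(1)[of \<alpha> c m] assms by auto
  let ?t = "t_opt (\<alpha> / 2) (m + c)"
  have "0 < ?t" "?t < 1 / m"
    using t_opt_pos[of "\<alpha> / 2" "m + c"] t_opt_inverse_iff(1)[of \<alpha> c m] m assms by auto
  then have "m < 1 / ?t"
    using m by (simp add: field_simps)
  moreover have "payoff \<alpha> c m < payoff \<alpha> c z" if "m < z" "z < 1 / ?t" for z
  proof (rule payoff_less_towards_inverse_t_opt)
    show "(m - z) * (1 / z - ?t) < 0"
      using that \<open>0 < ?t\<close> m by (intro mult_neg_pos) (auto simp: field_simps)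
  qed (use that m assms in auto)
  ultimately show "\<exists>y>m. \<forall>z. m < z \<longrightarrow> z < y \<longrightarrow> payoff \<alpha> c m < payoff \<alpha> c z"
    by blast
qed (use assms in auto)

lemma payoff_strict_antimono_above_psi_root:
  assumes "2 < \<alpha>" "\<alpha> < 4" "0 < c" "psi_root \<alpha> c \<le> L" "L < L'"
  shows "payoff \<alpha> c L' < payoff \<alpha> c L"
proof (rule less_if_locally_decreasing[where f = "payoff \<alpha> c"])
  have "0 < L"
    using psi_root(1)[of \<alpha> c] assms by simp
  then show "continuous_on {L..L'} (payoff \<alpha> c)"
    using assms by (intro continuous_on_subset[OF continuous_on_payoff]) auto
  fix m
  assume "L < m" "m \<le> L'"
  then have m: "0 < m" "c < psi \<alpha> m"
    using psi_less_iff_less_psi_root(2)[of \<alpha> c m] psi_root(1)[of \<alpha> c] assms by auto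
  let ?t = "t_opt (\<alpha> / 2) (m + c)"
  have "0 < ?t" "1 / m < ?t"
    using t_opt_pos[of "\<alpha> / 2" "m + c"] t_opt_inverse_iff(2)[of \<alpha> c m] m assms by auto
  then have "1 / ?t < m"
    using m by (simp add: field_simps)
  moreover have "payoff \<alpha> c m < payoff \<alpha> c z" if "1 / ?t < z" "z < m" for z
  proof (rule payoff_less_towards_inverse_t_opt)
    show "0 < z"
      using that \<open>0 < ?t\<close> by (smt (verit) divide_pos_pos)
    then show "(m - z) * (1 / z - ?t) < 0"
      using that \<open>0 < ?t\<close> by (intro mult_pos_neg) (auto simp: field_simps)
  qed (use m assms in auto)
  ultimately show "\<exists>y<m. \<forall>z. y < z \<longrightarrow> z < m \<longrightarrow> payoff \<alpha> c m < payoff \<alpha> c z"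
    by blast
qed (use assms in auto)

lemma payoff_less_best_response:
  assumes "2 < \<alpha>" "\<alpha> < 4" "0 < c" "0 < N" "L \<in> {0..N}" "L \<noteq> min N (psi_root \<alpha> c)"
  shows "payoff \<alpha> c L < payoff \<alpha> c (min N (psi_root \<alpha> c))"
proof -
  let ?T = "min N (psi_root \<alpha> c)"
  have "0 < ?T"
    using psi_root(1)[of \<alpha> c] assms by simp
  consider "L = 0" | "0 < L" "L < ?T" | "?T < L"
    using assms(5,6) by (cases "L = 0") (auto simp: neq_iff)
  then show ?thesis
  proof cases
    case 1
    then show ?thesis
      using payoff_pos[of \<alpha> c ?T] \<open>0 < ?T\<close> assms unfolding payoff_def by simp
  next
    case 2
    then show ?thesis
      using payoff_strict_mono_below_psi_root[of \<alpha> c L ?T] assms by simp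
  next
    case 3
    then have "?T = psi_root \<alpha> c"
      using assms(5) by auto
    then show ?thesis
      using payoff_strict_antimono_above_psi_root[of \<alpha> c ?T L] 3 assms by simp
  qed
qed

lemma best_response_iff:
  assumes "2 < \<alpha>" "\<alpha> < 4" "0 < c" "0 < N"
  shows "(L \<in> {0..N} \<and> (\<forall>l\<in>{0..N}. payoff \<alpha> c l \<le> payoff \<alpha> c L)) \<longleftrightarrow> L = min N (psi_root \<alpha> c)"
proof -
  let ?T = "min N (psi_root \<alpha> c)"
  have T: "?T \<in> {0..N}"
    using psi_root(1)[of \<alpha> c] assms by simp
  show ?thesis
  proof
    assume L: "L \<in> {0..N} \<and> (\<forall>l\<in>{0..N}. payoff \<alpha> c l \<le> payoff \<alpha> c L)"
    show "L = ?T"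
    proof (rule ccontr)
      assume "L \<noteq> ?T"
      then have "payoff \<alpha> c L < payoff \<alpha> c ?T"
        using payoff_less_best_response[OF assms, of L] L by blast
      moreover have "payoff \<alpha> c ?T \<le> payoff \<alpha> c L"
        using L T by blast
      ultimately show False
        by simp
    qed
  next
    assume "L = ?T"
    then show "L \<in> {0..N} \<and> (\<forall>l\<in>{0..N}. payoff \<alpha> c l \<le> payoff \<alpha> c L)"
      using payoff_less_best_response[OF assms] T by (metis order.order_iff_strict)
  qed
qed

section \<open>Nash equilibria\<close>

lemma nash_eq_iff_payoff:
  assumes "0 < \<alpha>"
  shows "nash_eq \<alpha> N1 N2 L1 L2 \<longleftrightarrow>
     L1 \<in> {0..N1} \<and> L2 \<in> {0..N2} \<and>
     (\<forall>l\<in>{0..N1}. payoff \<alpha> L2 l \<le> payoff \<alpha> L2 L1) \<and>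
     (\<forall>l\<in>{0..N2}. payoff \<alpha> L1 l \<le> payoff \<alpha> L1 L2)"
  unfolding nash_eq_def U1_def U2_def by (auto simp: rag_payoff_eq_payoff[OF assms])

lemma nash_eq_pos:
  assumes "0 < \<alpha>" "0 < N1" "0 < N2" "nash_eq \<alpha> N1 N2 L1 L2"
  shows "0 < L1" "0 < L2"
proof -
  note nash = assms(4)[unfolded nash_eq_iff_payoff[OF assms(1)]]
  have "payoff \<alpha> L2 0 < payoff \<alpha> L2 N1" "payoff \<alpha> L1 0 < payoff \<alpha> L1 N2"
    using payoff_pos[of \<alpha>] nash assms by (auto simp: payoff_def)
  then show "0 < L1" "0 < L2"
    using nash assms(2,3) by (metis atLeastAtMost_iff less_eq_real_def not_le)+
qed

lemma nash_eq_iff_best_responses: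
  assumes "2 < \<alpha>" "\<alpha> < 4" "0 < N1" "0 < N2"
  shows "nash_eq \<alpha> N1 N2 L1 L2 \<longleftrightarrow>
    0 < L1 \<and> 0 < L2 \<and> L1 = min N1 (psi_root \<alpha> L2) \<and> L2 = min N2 (psi_root \<alpha> L1)"
proof -
  have "0 < \<alpha>"
    using assms(1) by simp
  note nash_iff = nash_eq_iff_payoff[OF this]
  show ?thesis
  proof
    assume nash: "nash_eq \<alpha> N1 N2 L1 L2"
    have pos: "0 < L1" "0 < L2"
      using nash_eq_pos[OF \<open>0 < \<alpha>\<close> assms(3,4) nash] by auto
    have "L1 = min N1 (psi_root \<alpha> L2)"
      by (rule best_response_iff[OF assms(1,2) pos(2) assms(3), THEN iffD1])
        (use nash[unfolded nash_iff] in blast)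
    moreover have "L2 = min N2 (psi_root \<alpha> L1)"
      by (rule best_response_iff[OF assms(1,2) pos(1) assms(4), THEN iffD1])
        (use nash[unfolded nash_iff] in blast)
    ultimately show "0 < L1 \<and> 0 < L2 \<and> L1 = min N1 (psi_root \<alpha> L2) \<and> L2 = min N2 (psi_root \<alpha> L1)"
      using pos by blast
  next
    assume L: "0 < L1 \<and> 0 < L2 \<and> L1 = min N1 (psi_root \<alpha> L2) \<and> L2 = min N2 (psi_root \<alpha> L1)"
    have "L1 \<in> {0..N1} \<and> (\<forall>l\<in>{0..N1}. payoff \<alpha> L2 l \<le> payoff \<alpha> L2 L1)"
      by (rule best_response_iff[OF assms(1,2) _ assms(3), THEN iffD2]) (use L in blast)+
    moreover have "L2 \<in> {0..N2} \<and> (\<forall>l\<in>{0..N2}. payoff \<alpha> L1 l \<le> payoff \<alpha> L1 L2)"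
      by (rule best_response_iff[OF assms(1,2) _ assms(4), THEN iffD2]) (use L in blast)+
    ultimately show "nash_eq \<alpha> N1 N2 L1 L2"
      unfolding nash_iff by blast
  qed
qed

lemma mutual_min_responses_iff:
  fixes r :: "real \<Rightarrow> real"
  assumes "\<And>c. 0 < c \<Longrightarrow> c < r c" "\<And>c c'. 0 < c \<Longrightarrow> c \<le> c' \<Longrightarrow> r c \<le> r c'"
    and "0 < N1" "N1 \<le> N2" "0 < L1" "0 < L2"
  shows "L1 = min N1 (r L2) \<and> L2 = min N2 (r L1) \<longleftrightarrow> L1 = N1 \<and> L2 = min N2 (r N1)"
proof
  assume "L1 = min N1 (r L2) \<and> L2 = min N2 (r L1)"
  then have L1_eq: "L1 = min N1 (r L2)" and L2_eq: "L2 = min N2 (r L1)"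
    by blast+
  have "L1 = N1"
  proof (rule ccontr)
    assume "L1 \<noteq> N1"
    then have "L1 = r L2" "L1 < N1"
      using L1_eq by (simp_all add: min_def split: if_splits)
    then have "L2 < L1"
      using assms(1)[OF assms(6)] by simp
    moreover have "L1 < min N2 (r L1)"
      using \<open>L1 < N1\<close> assms(4) assms(1)[OF assms(5)] by simp
    ultimately show False
      using L2_eq by simp
  qed
  then show "L1 = N1 \<and> L2 = min N2 (r N1)"
    using L2_eq by simp
next
  assume L: "L1 = N1 \<and> L2 = min N2 (r N1)"
  have "N1 < r N1"
    using assms(1)[OF assms(3)] .
  then have "N1 \<le> L2"
    using L assms(4) by simp
  then have "r N1 \<le> r L2"
    using assms(2)[OF assms(3)] by blast
  with \<open>N1 < r N1\<close> L show "L1 = min N1 (r L2) \<and> L2 = min N2 (r L1)"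
    by simp
qed

lemma nash_eq_iff:
  assumes "2 < \<alpha>" "\<alpha> < 4" "0 < N1" "N1 \<le> N2"
  shows "nash_eq \<alpha> N1 N2 L1 L2 \<longleftrightarrow> L1 = N1 \<and> L2 = min N2 (psi_root \<alpha> N1)"
proof -
  have responses: "L1 = min N1 (psi_root \<alpha> L2) \<and> L2 = min N2 (psi_root \<alpha> L1) \<longleftrightarrow>
      L1 = N1 \<and> L2 = min N2 (psi_root \<alpha> N1)" if "0 < L1" "0 < L2"
    by (rule mutual_min_responses_iff[OF less_psi_root[OF assms(1,2)] psi_root_mono[OF assms(1,2)]
          assms(3,4) that])
  have "0 < min N2 (psi_root \<alpha> N1)"
    using psi_root(1)[OF assms(1-3)] assms(3,4) by simp
  then show ?thesis
    unfolding nash_eq_iff_best_responses[OF assms(1-3) order.strict_trans2[OF assms(3,4)]]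
    using responses assms(3) by blast
qed

theorem theorem2:
  fixes \<alpha> N1 N2 :: real
  assumes "2 < \<alpha>" and "\<alpha> < 4" and "0 < N1" and "N1 \<le> N2"
  shows "(\<exists>!x. 0 < x \<and>
            N1 = x * (\<alpha> / (2 * (1 + x powr (\<alpha> / 2)) * ln (1 + x powr (- \<alpha> / 2))) - 1))
       \<and> (\<forall>x. 0 < x \<and>
            N1 = x * (\<alpha> / (2 * (1 + x powr (\<alpha> / 2)) * ln (1 + x powr (- \<alpha> / 2))) - 1)
            \<longrightarrow> {(L1, L2). nash_eq \<alpha> N1 N2 L1 L2} = {(N1, min x N2)})"
proof -
  have root_iff: "0 < x \<and> N1 = x * (\<alpha> / (2 * (1 + x powr (\<alpha> / 2)) * ln (1 + x powr (- \<alpha> / 2))) - 1)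
      \<longleftrightarrow> 0 < x \<and> psi \<alpha> x = N1" for x
    unfolding psi_def by auto
  show ?thesis
    unfolding root_iff
  proof (intro conjI allI impI)
    show "\<exists>!x. 0 < x \<and> psi \<alpha> x = N1"
      using psi_eq_has_unique_root[OF assms(1-3)] .
    fix x
    assume "0 < x \<and> psi \<alpha> x = N1"
    then have "psi_root \<alpha> N1 = x"
      using psi_root_eqI[OF assms(1,2)] assms(3) by blast
    then show "{(L1, L2). nash_eq \<alpha> N1 N2 L1 L2} = {(N1, min x N2)}"
      by (auto simp: nash_eq_iff[OF assms] min.commute)
  qed
qed

end
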